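(* Let $T>0$, $\gamma>0$, $k\in\mathbb{R}$, and let $W$ be a standard one-dimensional Brownian motion with $W_0=0$ whose augmented natural filtration is $\{\mathcal{F}_t\}$. Let $\mathcal{D}_t=\{X\in L^0(\Omega,\mathcal{F}_t,P):E[\exp\{a|X|\}]<\infty\text{ for all }a>0\}$ and $\Pi_t(X)=-\frac1\gamma\log E[\exp\{-\gamma X\}\mid\mathcal{F}_t]$ for $X\in\mathcal{D}_T$, so that for each $X\in\mathcal{D}_T$ there is a progressively measurable $Z(X)$ with $E\int_0^T|Z_t(X)|^2dt<\infty$ and $X=\Pi_t(X)+\int_t^T\frac\gamma2Z_s(X)^2ds-\int_t^TZ_s(X)dW_s$ for all $t$. Let $S=(W_T-k)_+$ and, for $y\in\mathbb{R}$, $Z^y=Z(-yS)$. Then for every $t\in[0,T)$, $$\lim_{y\to\infty}Z^y_t=\infty,\qquad \lim_{y\to-\infty}Z^y_t=-\frac{\phi\big(\frac{k-W_t}{\sqrt{T-t}}\big)}{\gamma\sqrt{T-t}\,\Phi\big(\frac{k-W_t}{\sqrt{T-t}}\big)},$$ where $\phi$ and $\Phi$ are the standard normal density and distribution function.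
   Context: This is the Markov setting with factor $F=W$ (drift $0$, volatility $1$), driver $g(z,t)=\gamma z^2/2$, Market inventory $H_{\mathrm M}=0$ and security payoff $S=s(W_T)$ with $s(x)=(x-k)_+$; $Z^y_t=-\partial_wp(W_t,t,y)$ with $p(w,t,y)=-\frac1\gamma\log E[\exp(y\gamma(W_T-k)_+)\mid W_t=w]$. *)

theory Defs
  imports "HOL-Probability.Probability"
begin

definition std_normal_cdf :: "real \<Rightarrow> real" where
  "std_normal_cdf x = (LINT u:{..x}|lborel. std_normal_density u)"

text \<open>Markov representation: p(w,t,y) = -(1/gamma) log E[exp(y gamma (W_T - k)_+) | W_t = w],
  where conditionally on W_t = w, W_T = w + sqrt(T-t) N with N standard normal.\<close>
definition price_fn :: "real \<Rightarrow> real \<Rightarrow> real \<Rightarrow> real \<Rightarrow> real \<Rightarrow> real \<Rightarrow> real" where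
  "price_fn T \<gamma> k w t y =
     - (1 / \<gamma>) * ln (LINT x|lborel. std_normal_density x *
          exp (y * \<gamma> * max 0 (w + sqrt (T - t) * x - k)))"

text \<open>Z^y_t evaluated on the event W_t = w: Z = - d/dw p(w,t,y).\<close>
definition Z_fn :: "real \<Rightarrow> real \<Rightarrow> real \<Rightarrow> real \<Rightarrow> real \<Rightarrow> real \<Rightarrow> real" where
  "Z_fn T \<gamma> k w t y = - deriv (\<lambda>v. price_fn T \<gamma> k v t y) w"

end

theory Submission
  imports Defs "HOL-Real_Asymp.Real_Asymp"
begin

text \<open>
  Conditionally on \<open>W\<^sub>t = w\<close>, \<open>W\<^sub>T = w + s N\<close> with \<open>s = \<surd>(T - t)\<close> and \<open>N\<close> standard normal,
  and completing the square gives the closed form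
  \<open>F = E exp(c (w + s N - k)\<^sub>+) = \<Phi>(d) + \<phi>(d) M(d - c s)\<close>, where \<open>d = (k - w)/s\<close> and
  \<open>M(z) = (1 - \<Phi>(z))/\<phi>(z)\<close> is the Mills ratio. Since \<open>\<partial>\<^sub>w F = c (F - \<Phi>(d))\<close>, taking \<open>c = y\<gamma>\<close>
  gives \<open>Z\<^sup>y\<^sub>t = y \<phi>(d) M(z) / (\<Phi>(d) + \<phi>(d) M(z))\<close> with \<open>z = d - \<gamma> s y\<close>. As \<open>y \<rightarrow> \<infinity>\<close>,
  \<open>z \<rightarrow> -\<infinity>\<close> and \<open>M(z) \<rightarrow> \<infinity>\<close>, so \<open>Z\<^sup>y\<^sub>t \<sim> y\<close>. As \<open>y \<rightarrow> -\<infinity>\<close>, \<open>z \<rightarrow> \<infinity>\<close>, and the Gaussian tail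
  bounds \<open>1 - 1/z\<^sup>2 \<le> z M(z) \<le> 1\<close> give \<open>y M(z) = -(z - d) M(z)/(\<gamma> s) \<rightarrow> -1/(\<gamma> s)\<close> and \<open>M(z) \<rightarrow> 0\<close>.
\<close>

abbreviation "\<phi> \<equiv> std_normal_density"
abbreviation "\<Phi> \<equiv> std_normal_cdf"

lemma set_integrable_std_normal_density: "A \<in> sets borel \<Longrightarrow> set_integrable lborel A \<phi>"
  unfolding set_integrable_def by (rule integrable_mult_indicator) auto

lemma std_normal_density_pos: "0 < \<phi> x"
  using normal_density_pos[of 1 0 x] by simp

lemma std_normal_density_nonzero [simp]: "\<phi> x \<noteq> 0"
  using std_normal_density_pos[of x] by simp

lemma std_normal_density_has_real_derivative: "(\<phi> has_real_derivative - x * \<phi> x) (at x)"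
proof -
  have "((\<lambda>x. exp (- x\<^sup>2 / 2)) has_real_derivative exp (- x\<^sup>2 / 2) * (- x)) (at x)"
    by (auto intro!: derivative_eq_intros simp: power2_eq_square)
  from DERIV_cmult[OF this, of "1 / sqrt (2 * pi)"] show ?thesis
    unfolding std_normal_density_def[abs_def] by (simp add: mult_ac)
qed

lemma std_normal_density_mult_exp: "\<phi> x * exp (b * x) = exp (b\<^sup>2 / 2) * \<phi> (x - b)"
proof -
  have "- x\<^sup>2 / 2 + b * x = b\<^sup>2 / 2 + - (x - b)\<^sup>2 / 2"
    by (simp add: power2_eq_square field_simps)
  then show ?thesis
    unfolding std_normal_density_def by (simp add: exp_add[symmetric])
qed

subsection \<open>The standard normal distribution function\<close>

lemma std_normal_cdf_eq_cdf: "\<Phi> x = cdf (density lborel \<phi>) x"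
proof -
  have "emeasure (density lborel \<phi>) {..x} = (\<integral>\<^sup>+ v. ennreal (indicator {..x} v * \<phi> v) \<partial>lborel)"
    by (subst emeasure_density) (auto intro!: nn_integral_cong split: split_indicator)
  also have "\<dots> = ennreal (\<Phi> x)"
    using set_integrable_std_normal_density[of "{..x}"]
    unfolding std_normal_cdf_def set_lebesgue_integral_def set_integrable_def
    by (subst nn_integral_eq_integral) auto
  finally show ?thesis
    unfolding cdf_def2 measure_def std_normal_cdf_def set_lebesgue_integral_def
    by (simp add: integral_nonneg_AE)
qed

lemma real_distribution_std_normal: "real_distribution (density lborel \<phi>)"
  unfolding real_distribution_def real_distribution_axioms_def
  by (auto simp: prob_space_normal_density)

lemma std_normal_cdf_tendsto_at_top: "(\<Phi> \<longlongrightarrow> 1) at_top"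
  using real_distribution.cdf_lim_at_top_prob[OF real_distribution_std_normal]
  by (simp add: std_normal_cdf_eq_cdf[abs_def])

lemma std_normal_cdf_nonneg: "0 \<le> \<Phi> x"
  by (simp add: std_normal_cdf_eq_cdf cdf_def2)

lemma std_normal_cdf_le_1: "\<Phi> x \<le> 1"
  using real_distribution.cdf_bounded_prob[OF real_distribution_std_normal]
  by (simp add: std_normal_cdf_eq_cdf)

lemma std_normal_cdf_add_interval:
  assumes "a \<le> u"
  shows "\<Phi> u = \<Phi> a + (LBINT v=a..u. \<phi> v)"
proof -
  have "{..u} = {..a} \<union> {a<..u}" using assms by auto
  then have "\<Phi> u = (LINT v:{..a} \<union> {a<..u}|lborel. \<phi> v)" by (simp add: std_normal_cdf_def)
  also have "\<dots> = \<Phi> a + (LINT v:{a<..u}|lborel. \<phi> v)"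
    by (subst set_integral_Un) (auto simp: set_integrable_std_normal_density std_normal_cdf_def)
  finally show ?thesis using assms by (simp add: interval_integral_Ioc)
qed

lemma std_normal_cdf_has_real_derivative: "(\<Phi> has_real_derivative \<phi> x) (at x)"
proof -
  have "continuous_on {x-1..x+1} \<phi>"
    unfolding std_normal_density_def by (intro continuous_intros) auto
  then have "((\<lambda>u. LBINT v=(x-1)..u. \<phi> v) has_vector_derivative \<phi> x) (at x within {x-1..x+1})"
    by (intro interval_integral_FTC2) auto
  then have "((\<lambda>u. \<Phi> (x-1) + (LBINT v=(x-1)..u. \<phi> v)) has_real_derivative \<phi> x) (at x)"
    by (auto intro!: derivative_eq_intros
        simp: at_within_Icc_at has_real_derivative_iff_has_vector_derivative)
  then show ?thesis
  proof (rule has_field_derivative_transform_within_open[where S="{x-1<..}"])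
    show "\<Phi> (x-1) + (LBINT v=(x-1)..u. \<phi> v) = \<Phi> u" if "u \<in> {x-1<..}" for u
      using std_normal_cdf_add_interval[of "x-1" u] that by simp
  qed auto
qed

lemma std_normal_cdf_has_real_derivative_chain [derivative_intros]:
  "(f has_real_derivative f') (at x within S) \<Longrightarrow>
   ((\<lambda>x. \<Phi> (f x)) has_real_derivative \<phi> (f x) * f') (at x within S)"
  by (rule DERIV_chain2[OF std_normal_cdf_has_real_derivative])

lemma std_normal_cdf_strict_mono: "a < b \<Longrightarrow> \<Phi> a < \<Phi> b"
  by (rule DERIV_pos_imp_increasing[where f=\<Phi>])
     (metis std_normal_cdf_has_real_derivative std_normal_density_pos)+

lemma std_normal_cdf_pos: "0 < \<Phi> x"
  using std_normal_cdf_strict_mono[of "x-1" x] std_normal_cdf_nonneg[of "x-1"] by simp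

lemma std_normal_cdf_less_1: "\<Phi> x < 1"
  using std_normal_cdf_strict_mono[of x "x+1"] std_normal_cdf_le_1[of "x+1"] by simp

lemma integral_std_normal_tail: "(LINT v|lborel. indicator {z<..} v * \<phi> v) = 1 - \<Phi> z"
proof -
  have "(LINT v:{..z} \<union> {z<..}|lborel. \<phi> v) = \<Phi> z + (LINT v:{z<..}|lborel. \<phi> v)"
    by (subst set_integral_Un) (auto simp: set_integrable_std_normal_density std_normal_cdf_def)
  moreover have "{..z} \<union> {z<..} = (UNIV::real set)" by auto
  ultimately show ?thesis by (simp add: set_lebesgue_integral_def)
qed

text \<open>The argument has the shape produced by \<open>lborel_integral_real_affine\<close>.\<close>

lemma indicator_greaterThan_shift:
  fixes a m x :: real
  shows "indicator {a - m<..} (- m + 1 * x) = (indicator {a<..} x :: real)"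
  by (auto split: split_indicator)

lemma integrable_std_normal_shifted_tail:
  "integrable lborel (\<lambda>x. indicator {a<..} x * \<phi> (x - m))"
proof -
  have "integrable lborel (\<lambda>x. indicator {a-m<..} (-m + 1*x) * \<phi> (-m + 1*x))"
    using set_integrable_std_normal_density[of "{a-m<..}"] unfolding set_integrable_def
    by (intro lborel_integrable_real_affine[where f="\<lambda>u. indicator {a-m<..} u * \<phi> u"]) auto
  then show ?thesis by (simp only: indicator_greaterThan_shift) simp
qed

lemma integral_std_normal_shifted_tail:
  "(LINT x|lborel. indicator {a<..} x * \<phi> (x - m)) = 1 - \<Phi> (a - m)"
proof -
  have "(LINT u|lborel. indicator {a-m<..} u * \<phi> u) =
      (LINT x|lborel. indicator {a-m<..} (-m + 1*x) * \<phi> (-m + 1*x))"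
    using lborel_integral_real_affine[of 1 "\<lambda>u. indicator {a-m<..} u * \<phi> u" "-m"] by simp
  also have "\<dots> = (LINT x|lborel. indicator {a<..} x * \<phi> (x - m))"
    by (simp only: indicator_greaterThan_shift) simp
  finally show ?thesis using integral_std_normal_tail[of "a - m"] by simp
qed

subsection \<open>The Mills ratio\<close>

definition mills_ratio :: "real \<Rightarrow> real" where
  "mills_ratio z = (1 - \<Phi> z) / \<phi> z"

lemma mills_ratio_pos: "0 < mills_ratio z"
  unfolding mills_ratio_def using std_normal_cdf_less_1[of z] std_normal_density_pos[of z] by simp

lemma nonneg_if_deriv_nonpos_tendsto_0:
  fixes g g' :: "real \<Rightarrow> real"
  assumes "\<And>x. x > a \<Longrightarrow> (g has_real_derivative g' x) (at x)" "\<And>x. x > a \<Longrightarrow> g' x \<le> 0"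
    and "(g \<longlongrightarrow> 0) at_top" "z > a"
  shows "g z \<ge> 0"
proof -
  have "eventually (\<lambda>x. g x \<le> g z) at_top"
    using eventually_ge_at_top[of z]
  proof eventually_elim
    case (elim x)
    show ?case
    proof (rule DERIV_nonpos_imp_nonincreasing[OF elim])
      fix u assume "z \<le> u"
      then have "u > a" using \<open>z > a\<close> by simp
      then show "\<exists>y. (g has_real_derivative y) (at u) \<and> y \<le> 0" using assms(1,2) by blast
    qed
  qed
  from tendsto_upperbound[OF assms(3) this] show ?thesis by simp
qed

lemma std_normal_density_div_tendsto_0: "((\<lambda>z. \<phi> z / z) \<longlongrightarrow> 0) at_top"
  unfolding std_normal_density_def by real_asymp

lemma std_normal_density_mult_tendsto_0: "((\<lambda>z. \<phi> z * (1 / z - 1 / z ^ 3)) \<longlongrightarrow> 0) at_top"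
  unfolding std_normal_density_def by real_asymp

lemma std_normal_upper_tail_tendsto_0: "((\<lambda>z. 1 - \<Phi> z) \<longlongrightarrow> 0) at_top"
  using tendsto_diff[OF tendsto_const[of 1] std_normal_cdf_tendsto_at_top] by simp

lemma std_normal_tail_upper_bound:
  assumes "z > 0"
  shows "1 - \<Phi> z \<le> \<phi> z / z"
proof -
  have "\<phi> z / z - (1 - \<Phi> z) \<ge> 0"
  proof (rule nonneg_if_deriv_nonpos_tendsto_0[where a=0 and z=z and g'="\<lambda>x. - \<phi> x / x\<^sup>2"
        and g="\<lambda>z. \<phi> z / z - (1 - \<Phi> z)"])
    fix x :: real assume "x > 0"
    then show "((\<lambda>z. \<phi> z / z - (1 - \<Phi> z)) has_real_derivative - \<phi> x / x\<^sup>2) (at x)"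
      by (auto intro!: derivative_eq_intros std_normal_density_has_real_derivative
          simp: field_simps power2_eq_square)
  next
    show "((\<lambda>z. \<phi> z / z - (1 - \<Phi> z)) \<longlongrightarrow> 0) at_top"
      using tendsto_diff[OF std_normal_density_div_tendsto_0 std_normal_upper_tail_tendsto_0] by simp
  qed (use assms in auto)
  then show ?thesis by simp
qed

lemma std_normal_tail_lower_bound:
  assumes "z > 0"
  shows "\<phi> z * (1 / z - 1 / z ^ 3) \<le> 1 - \<Phi> z"
proof -
  have "(1 - \<Phi> z) - \<phi> z * (1 / z - 1 / z ^ 3) \<ge> 0"
  proof (rule nonneg_if_deriv_nonpos_tendsto_0[where a=0 and z=z and g'="\<lambda>x. - 3 * \<phi> x / x ^ 4"
        and g="\<lambda>z. (1 - \<Phi> z) - \<phi> z * (1 / z - 1 / z ^ 3)"])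
    fix x :: real assume "x > 0"
    then show "((\<lambda>z. (1 - \<Phi> z) - \<phi> z * (1 / z - 1 / z ^ 3)) has_real_derivative
        - 3 * \<phi> x / x ^ 4) (at x)"
      by (auto intro!: derivative_eq_intros std_normal_density_has_real_derivative
          simp: field_simps power2_eq_square eval_nat_numeral)
  next
    show "((\<lambda>z. (1 - \<Phi> z) - \<phi> z * (1 / z - 1 / z ^ 3)) \<longlongrightarrow> 0) at_top"
      using tendsto_diff[OF std_normal_upper_tail_tendsto_0 std_normal_density_mult_tendsto_0] by simp
  qed (use assms in auto)
  then show ?thesis by simp
qed

lemma mills_ratio_bounds:
  assumes "z > 0"
  shows "1 - 1 / z\<^sup>2 \<le> z * mills_ratio z" and "z * mills_ratio z \<le> 1"
proof -
  have "\<phi> z > 0" by (rule std_normal_density_pos)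
  have "\<phi> z * (1 - 1 / z\<^sup>2) = z * (\<phi> z * (1 / z - 1 / z ^ 3))"
    using assms by (simp add: field_simps power2_eq_square power3_eq_cube)
  also have "\<dots> \<le> z * (1 - \<Phi> z)"
    using std_normal_tail_lower_bound[OF assms] assms by (intro mult_left_mono) auto
  finally show "1 - 1 / z\<^sup>2 \<le> z * mills_ratio z"
    using \<open>\<phi> z > 0\<close> by (simp add: mills_ratio_def field_simps)
  show "z * mills_ratio z \<le> 1"
    using std_normal_tail_upper_bound[OF assms] assms \<open>\<phi> z > 0\<close>
    by (simp add: mills_ratio_def field_simps)
qed

lemma mills_ratio_asymptotic: "((\<lambda>z. z * mills_ratio z) \<longlongrightarrow> 1) at_top"
proof (rule tendsto_sandwich[where f="\<lambda>z. 1 - 1 / z\<^sup>2" and h="\<lambda>z. 1"])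
  show "eventually (\<lambda>z. 1 - 1 / z\<^sup>2 \<le> z * mills_ratio z) at_top"
    using eventually_gt_at_top[of 0] by eventually_elim (rule mills_ratio_bounds)
  show "eventually (\<lambda>z. z * mills_ratio z \<le> 1) at_top"
    using eventually_gt_at_top[of 0] by eventually_elim (rule mills_ratio_bounds)
  show "((\<lambda>z::real. 1 - 1 / z\<^sup>2) \<longlongrightarrow> 1) at_top" by real_asymp
qed auto

lemma mills_ratio_tendsto_0: "(mills_ratio \<longlongrightarrow> 0) at_top"
proof -
  have "((\<lambda>z. z * mills_ratio z * (1 / z)) \<longlongrightarrow> 1 * 0) at_top"
    by (intro tendsto_mult mills_ratio_asymptotic) real_asymp
  then have "((\<lambda>z. z * mills_ratio z * (1 / z)) \<longlongrightarrow> 0) at_top" by simp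
  then show ?thesis
    by (rule Lim_transform_eventually) (use eventually_gt_at_top[of 0] in \<open>eventually_elim, simp\<close>)
qed

lemma mills_ratio_shift_asymptotic: "((\<lambda>z. (z - a) * mills_ratio z) \<longlongrightarrow> 1) at_top"
  using tendsto_diff[OF mills_ratio_asymptotic tendsto_mult_right_zero[OF mills_ratio_tendsto_0, of a]]
  by (simp add: left_diff_distrib)

lemma mills_ratio_at_bot: "filterlim mills_ratio at_top at_bot"
proof -
  have "(\<Phi> \<longlongrightarrow> 0) at_bot"
    using finite_borel_measure.cdf_lim_at_bot[OF
        real_distribution.finite_borel_measure_M[OF real_distribution_std_normal]]
    by (simp add: std_normal_cdf_eq_cdf[abs_def])
  then have "((\<lambda>z. 1 - \<Phi> z) \<longlongrightarrow> 1) at_bot"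
    using tendsto_diff[OF tendsto_const[of 1]] by fastforce
  moreover have "(\<phi> \<longlongrightarrow> 0) at_bot"
    unfolding std_normal_density_def by real_asymp
  ultimately show ?thesis
    unfolding mills_ratio_def[abs_def]
    by (intro LIM_at_top_divide) (auto simp: std_normal_density_pos)
qed

subsection \<open>The exponential moment of a call payoff\<close>

definition exp_call_mean :: "real \<Rightarrow> real \<Rightarrow> real \<Rightarrow> real \<Rightarrow> real" where
  "exp_call_mean s c k w =
     \<Phi> ((k - w) / s) + exp (c * (w - k) + (c * s)\<^sup>2 / 2) * (1 - \<Phi> ((k - w) / s - c * s))"

lemma integral_std_normal_exp_call:
  assumes "s > 0"
  shows "(LINT x|lborel. \<phi> x * exp (c * max 0 (w + s * x - k))) = exp_call_mean s c k w"
proof -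
  define d where "d = (k - w) / s"
  define E where "E = exp (c * (w - k) + (c * s)\<^sup>2 / 2)"
  have split: "\<phi> x * exp (c * max 0 (w + s * x - k)) =
      indicator {..d} x * \<phi> x + E * (indicator {d<..} x * \<phi> (x - c * s))" for x
  proof (cases "x \<le> d")
    case True
    then have "s * x \<le> k - w" using assms by (simp add: d_def pos_le_divide_eq mult.commute)
    then show ?thesis using True by (simp add: max_def)
  next
    case False
    then have "s * x > k - w" using assms by (simp add: d_def not_le pos_divide_less_eq mult.commute)
    moreover have "\<phi> x * exp (c * (w + s * x - k)) = exp (c * (w - k)) * (\<phi> x * exp (c * s * x))"
      by (simp add: algebra_simps exp_add[symmetric])
    ultimately show ?thesis
      using False by (simp add: max_def E_def std_normal_density_mult_exp exp_add)
  qed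
  have "(LINT x|lborel. \<phi> x * exp (c * max 0 (w + s * x - k))) =
      (LINT x|lborel. indicator {..d} x * \<phi> x) + (LINT x|lborel. E * (indicator {d<..} x * \<phi> (x - c * s)))"
    unfolding split using set_integrable_std_normal_density[of "{..d}"]
    by (intro Bochner_Integration.integral_add integrable_mult_right integrable_std_normal_shifted_tail)
       (auto simp: set_integrable_def)
  also have "\<dots> = \<Phi> d + E * (1 - \<Phi> (d - c * s))"
    by (simp add: integral_std_normal_shifted_tail std_normal_cdf_def set_lebesgue_integral_def)
  finally show ?thesis by (simp add: exp_call_mean_def d_def E_def)
qed

lemma exp_mult_std_normal_density_shift:
  assumes "s \<noteq> 0"
  shows "exp (c * (w - k) + (c * s)\<^sup>2 / 2) * \<phi> ((k - w) / s - c * s) = \<phi> ((k - w) / s)"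
proof -
  define d where "d = (k - w) / s"
  have cd: "c * s * d = - (c * (w - k))" using assms by (simp add: d_def field_simps)
  have "exp (c * (w - k) + (c * s)\<^sup>2 / 2) * \<phi> (d - c * s) =
      exp (c * (w - k)) * (exp ((c * s)\<^sup>2 / 2) * \<phi> (d - c * s))"
    by (simp add: exp_add)
  also have "\<dots> = exp (c * (w - k)) * (\<phi> d * exp (- (c * (w - k))))"
    by (simp only: std_normal_density_mult_exp[symmetric] cd)
  also have "\<dots> = \<phi> d" by (simp add: exp_minus)
  finally show ?thesis by (simp add: d_def)
qed

lemma exp_call_mean_eq_mills_ratio:
  assumes "s \<noteq> 0"
  shows "exp_call_mean s c k w = \<Phi> ((k - w) / s) + \<phi> ((k - w) / s) * mills_ratio ((k - w) / s - c * s)"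
  unfolding exp_call_mean_def mills_ratio_def exp_mult_std_normal_density_shift[OF assms, of c w k, symmetric]
  by simp

lemma exp_call_mean_pos: "0 < exp_call_mean s c k w"
  unfolding exp_call_mean_def
  using std_normal_cdf_pos std_normal_cdf_less_1 by (intro add_pos_nonneg) (auto simp: less_imp_le)

lemma exp_call_mean_has_real_derivative:
  assumes "s \<noteq> 0"
  shows "(exp_call_mean s c k has_real_derivative c * (exp_call_mean s c k w - \<Phi> ((k - w) / s))) (at w)"
proof -
  note tilt = exp_mult_std_normal_density_shift[OF assms, of c w k, symmetric]
  show ?thesis
    unfolding exp_call_mean_def[abs_def]
    by (intro derivative_eq_intros refl) (use assms in \<open>auto simp: tilt\<close>)
qed

lemma filterlim_mills_ratio_quotient_at_top:
  assumes "0 < a" and "0 < b" and "0 < r"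
  shows "filterlim (\<lambda>y. y * b * mills_ratio (d - r * y) / (a + b * mills_ratio (d - r * y))) at_top at_top"
proof -
  define G where "G y = a + b * mills_ratio (d - r * y)" for y
  have "G y > 0" for y
    using assms mills_ratio_pos by (simp add: G_def add_pos_pos)
  have "filterlim (\<lambda>y. d - r * y) at_bot at_top"
    using \<open>0 < r\<close> by real_asymp
  then have "filterlim G at_top at_top"
    unfolding G_def using \<open>0 < b\<close>
    by (intro filterlim_tendsto_add_at_top[OF tendsto_const]
        filterlim_tendsto_pos_mult_at_top[OF tendsto_const] filterlim_compose[OF mills_ratio_at_bot])
  then have "((\<lambda>y. 1 - a / G y) \<longlongrightarrow> 1 - 0) at_top"
    by (intro tendsto_diff tendsto_const tendsto_divide_0[OF tendsto_const]
        filterlim_at_top_imp_at_infinity)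
  then have "LIM y at_top. (1 - a / G y) * y :> at_top"
    using filterlim_tendsto_pos_mult_at_top[OF _ zero_less_one filterlim_ident] by simp
  moreover have "(1 - a / G y) * y = y * b * mills_ratio (d - r * y) / (a + b * mills_ratio (d - r * y))" for y
    using \<open>G y > 0\<close> by (simp add: G_def field_simps)
  ultimately show ?thesis by simp
qed

lemma tendsto_mills_ratio_quotient_at_bot:
  assumes "0 < a" and "0 < r"
  shows "((\<lambda>y. y * b * mills_ratio (d - r * y) / (a + b * mills_ratio (d - r * y))) \<longlongrightarrow> - b / (r * a)) at_bot"
proof -
  have z_lim: "filterlim (\<lambda>y. d - r * y) at_top at_bot"
    using \<open>0 < r\<close> by real_asymp
  have "((\<lambda>y. (d - r * y - d) * mills_ratio (d - r * y)) \<longlongrightarrow> 1) at_bot"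
    by (rule filterlim_compose[OF mills_ratio_shift_asymptotic z_lim])
  moreover have "y * b * mills_ratio (d - r * y) = - b / r * ((d - r * y - d) * mills_ratio (d - r * y))" for y
    using \<open>0 < r\<close> by (simp add: field_simps)
  ultimately have "((\<lambda>y. y * b * mills_ratio (d - r * y)) \<longlongrightarrow> - b / r * 1) at_bot"
    by (simp only:) (intro tendsto_mult tendsto_const)
  moreover have "((\<lambda>y. a + b * mills_ratio (d - r * y)) \<longlongrightarrow> a + b * 0) at_bot"
    by (intro tendsto_add tendsto_mult tendsto_const filterlim_compose[OF mills_ratio_tendsto_0 z_lim])
  ultimately show ?thesis
    using \<open>0 < a\<close> by (auto dest: tendsto_divide)
qed

lemma Z_fn_eq:
  fixes T \<gamma> k w t y :: real
  assumes "\<gamma> > 0" and "t < T"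
  defines "s \<equiv> sqrt (T - t)" and "d \<equiv> (k - w) / sqrt (T - t)"
  shows "Z_fn T \<gamma> k w t y =
    y * \<phi> d * mills_ratio (d - \<gamma> * s * y) / (\<Phi> d + \<phi> d * mills_ratio (d - \<gamma> * s * y))"
proof -
  let ?F = "exp_call_mean s (y * \<gamma>) k"
  have "s > 0" using assms by (simp add: s_def)
  then have price: "(\<lambda>v. price_fn T \<gamma> k v t y) = (\<lambda>v. - (1 / \<gamma>) * ln (?F v))"
    by (simp add: price_fn_def integral_std_normal_exp_call s_def)
  have "((\<lambda>v. ln (?F v)) has_real_derivative (1 / ?F w) * (y * \<gamma> * (?F w - \<Phi> d))) (at w)"
    using \<open>s > 0\<close> unfolding d_def s_def[symmetric]
    by (intro DERIV_chain2[OF DERIV_ln_divide[OF exp_call_mean_pos] exp_call_mean_has_real_derivative]) simp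
  then have "Z_fn T \<gamma> k w t y = y * (?F w - \<Phi> d) / ?F w"
    unfolding Z_fn_def price
    by (subst DERIV_imp_deriv[OF DERIV_cmult]) (use \<open>\<gamma> > 0\<close> in \<open>simp_all add: field_simps\<close>)
  also have "\<dots> = y * \<phi> d * mills_ratio (d - \<gamma> * s * y) / (\<Phi> d + \<phi> d * mills_ratio (d - \<gamma> * s * y))"
    using exp_call_mean_eq_mills_ratio[of s "y * \<gamma>" k w] \<open>s > 0\<close>
    by (simp add: d_def s_def[symmetric] mult_ac)
  finally show ?thesis .
qed

theorem proposition1:
  fixes T \<gamma> k t w :: real
  assumes "T > 0" and "\<gamma> > 0" and "0 \<le> t" and "t < T"
  shows "filterlim (\<lambda>y. Z_fn T \<gamma> k w t y) at_top at_top \<and>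
         ((\<lambda>y. Z_fn T \<gamma> k w t y) \<longlongrightarrow>
           - std_normal_density ((k - w) / sqrt (T - t))
             / (\<gamma> * sqrt (T - t) * std_normal_cdf ((k - w) / sqrt (T - t)))) at_bot"
proof -
  define s where "s = sqrt (T - t)"
  define d where "d = (k - w) / sqrt (T - t)"
  have "0 < \<gamma> * s" using assms by (simp add: s_def)
  have Z: "(\<lambda>y. Z_fn T \<gamma> k w t y) =
      (\<lambda>y. y * \<phi> d * mills_ratio (d - \<gamma> * s * y) / (\<Phi> d + \<phi> d * mills_ratio (d - \<gamma> * s * y)))"
    using Z_fn_eq[OF assms(2,4)] by (simp add: s_def d_def)
  show ?thesis
    unfolding Z
    using filterlim_mills_ratio_quotient_at_top[where d=d, OF std_normal_cdf_pos[of d] std_normal_density_pos[of d]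
        \<open>0 < \<gamma> * s\<close>]
      tendsto_mills_ratio_quotient_at_bot[where b="\<phi> d" and d=d, OF std_normal_cdf_pos[of d] \<open>0 < \<gamma> * s\<close>]
    by (simp add: d_def s_def mult_ac)
qed

end
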